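(* Let $X$ be a connected simple graph with countable vertex set, bounded degree and no vertex of degree one; let $M=\sup_{x\in VX}\deg(x)$, $\alpha=\frac{M+\sqrt{M^2+4M}}{2}$, and $f(u)=A_Xu-Q_Xu^2$ for $u\in\mathbb C$. Then for $|u|<1/\alpha$, $$f'(u)(I-f(u))^{-1}=-\frac{d}{du}\log(I-f(u))+u^2\sum_{n=1}^\infty\frac1n\sum_{j=1}^{n-1}j\,f(u)^{n-1-j}[A_X,Q_X]f(u)^{j-1},$$ where $[A_X,Q_X]=A_XQ_X-Q_XA_X$.
   Context: For a graph $X$ with edges $e$ having origin $o(e)$ and terminus $t(e)$, $E_x=\{e:o(e)=x\}$, $\deg(x)=|E_x|$; simple means no loops and no multiple edges. On $\ell^2(VX)$: $(A_Xf)(x)=\sum_{e\in E_x}f(t(e))$, $(D_Xf)(x)=\deg(x)f(x)$, $Q_X=D_X-I$. For $|u|<1/\alpha$ one has $\|f(u)\|<1$ in operator norm, and $\log(I-f(u))$ denotes $-\sum_{n=1}^\infty\frac1n f(u)^n$ (convergent in operator norm, uniformly on compact subsets), with its derivative in $u$. *)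

theory Defs
  imports "HOL-Analysis.Analysis"
begin

text \<open>Operators on l2(V) are modelled as maps on complex-valued functions on the
vertex type; only their behaviour on square-summable functions matters.\<close>

type_synonym 'v op = "('v \<Rightarrow> complex) \<Rightarrow> ('v \<Rightarrow> complex)"

definition ell2 :: "('v \<Rightarrow> complex) set" where
  "ell2 = {g. (\<lambda>x. (cmod (g x))\<^sup>2) summable_on UNIV}"

definition l2norm :: "('v \<Rightarrow> complex) \<Rightarrow> real" where
  "l2norm g = sqrt (infsum (\<lambda>x. (cmod (g x))\<^sup>2) UNIV)"

definition op_bound :: "'v op \<Rightarrow> real \<Rightarrow> bool" where
  "op_bound T c \<longleftrightarrow> (\<forall>g\<in>ell2. T g \<in> ell2 \<and> l2norm (T g) \<le> c * l2norm g)"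

definition op_diff :: "'v op \<Rightarrow> 'v op \<Rightarrow> 'v op" where
  "op_diff T S = (\<lambda>g x. T g x - S g x)"

definition op_tendsto :: "(nat \<Rightarrow> 'v op) \<Rightarrow> 'v op \<Rightarrow> bool" where
  "op_tendsto T S \<longleftrightarrow> (\<forall>\<epsilon>>0. eventually (\<lambda>N. op_bound (op_diff (T N) S) \<epsilon>) sequentially)"

definition op_sums :: "(nat \<Rightarrow> 'v op) \<Rightarrow> 'v op \<Rightarrow> bool" where
  "op_sums T S \<longleftrightarrow> op_tendsto (\<lambda>N g x. \<Sum>n<N. T n g x) S"

definition op_has_deriv :: "(complex \<Rightarrow> 'v op) \<Rightarrow> 'v op \<Rightarrow> complex \<Rightarrow> bool" where
  "op_has_deriv F D u \<longleftrightarrow>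
     (\<forall>\<epsilon>>0. \<exists>\<delta>>0. \<forall>h. h \<noteq> 0 \<and> cmod h < \<delta> \<longrightarrow>
        op_bound (\<lambda>g x. (F (u + h) g x - F u g x) / h - D g x) \<epsilon>)"

definition op_inverse :: "'v op \<Rightarrow> 'v op \<Rightarrow> bool" where
  "op_inverse T R \<longleftrightarrow> (\<exists>K. op_bound R K) \<and>
     (\<forall>g\<in>ell2. T g \<in> ell2 \<and> R (T g) = g \<and> T (R g) = g)"

definition deg :: "('v \<Rightarrow> 'v \<Rightarrow> bool) \<Rightarrow> 'v \<Rightarrow> nat" where
  "deg Adj x = card {y. Adj x y}"

definition opA :: "('v \<Rightarrow> 'v \<Rightarrow> bool) \<Rightarrow> 'v op" where
  "opA Adj g = (\<lambda>x. \<Sum>y\<in>{y. Adj x y}. g y)"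

definition opQ :: "('v \<Rightarrow> 'v \<Rightarrow> bool) \<Rightarrow> 'v op" where
  "opQ Adj g = (\<lambda>x. (of_nat (deg Adj x) - 1) * g x)"

definition fop :: "('v \<Rightarrow> 'v \<Rightarrow> bool) \<Rightarrow> complex \<Rightarrow> 'v op" where
  "fop Adj u g = (\<lambda>x. u * opA Adj g x - u\<^sup>2 * opQ Adj g x)"

definition fop' :: "('v \<Rightarrow> 'v \<Rightarrow> bool) \<Rightarrow> complex \<Rightarrow> 'v op" where
  "fop' Adj u g = (\<lambda>x. opA Adj g x - 2 * u * opQ Adj g x)"

definition one_minus_f :: "('v \<Rightarrow> 'v \<Rightarrow> bool) \<Rightarrow> complex \<Rightarrow> 'v op" where
  "one_minus_f Adj u g = (\<lambda>x. g x - fop Adj u g x)"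

definition commAQ :: "('v \<Rightarrow> 'v \<Rightarrow> bool) \<Rightarrow> 'v op" where
  "commAQ Adj g = (\<lambda>x. opA Adj (opQ Adj g) x - opQ Adj (opA Adj g) x)"

text \<open>n-th term (n = m+1) of log(I - f(u)) = - sum_{n>=1} f(u)^n / n\<close>
definition log_term :: "('v \<Rightarrow> 'v \<Rightarrow> bool) \<Rightarrow> complex \<Rightarrow> nat \<Rightarrow> 'v op" where
  "log_term Adj u m g = (\<lambda>x. - (1 / of_nat (Suc m)) * ((fop Adj u ^^ Suc m) g) x)"

text \<open>n-th term (n = m+1) of sum_{n>=1} 1/n sum_{j=1}^{n-1} j f^{n-1-j} [A,Q] f^{j-1}\<close>
definition comm_term :: "('v \<Rightarrow> 'v \<Rightarrow> bool) \<Rightarrow> complex \<Rightarrow> nat \<Rightarrow> 'v op" where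
  "comm_term Adj u m g = (\<lambda>x. (1 / of_nat (Suc m)) *
      (\<Sum>j\<in>{1..m}. of_nat j *
         ((fop Adj u ^^ (m - j)) (commAQ Adj ((fop Adj u ^^ (j - 1)) g))) x))"

definition sup_deg :: "('v \<Rightarrow> 'v \<Rightarrow> bool) \<Rightarrow> real" where
  "sup_deg Adj = real (Sup (range (deg Adj)))"

definition alpha :: "('v \<Rightarrow> 'v \<Rightarrow> bool) \<Rightarrow> real" where
  "alpha Adj = (sup_deg Adj + sqrt ((sup_deg Adj)\<^sup>2 + 4 * sup_deg Adj)) / 2"

end

theory Submission
  imports Defs
begin

text \<open>Write f = f(u), f' = f'(u). Since f' f = f f' + u^2 [A,Q], moving f' across
  the powers of f one factor at a time gives
  (n+1) f' f^n = (f^(n+1))' + u^2 \<Sum>j=1..n. j f^(n-j) [A,Q] f^(j-1),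
  where (f^(n+1))' is the derivative of u \<mapsto> f(u)^(n+1). Dividing by n+1 and summing
  over n turns the left side into f' (I - f)^-1 and the right side into
  -d/du log(I - f) plus u^2 times the commutator series. All series converge in
  operator norm because ||A||, ||Q|| \<le> M, so ||f(u)|| \<le> M|u| + M|u|^2, which is
  < 1 exactly when |u| < 1/alpha (alpha solves alpha^2 = M alpha + M).
  Termwise differentiation of the logarithm is justified by an O(|h| n^2 q^(n-1))
  bound on the error of the difference quotients of f^n, and uniqueness of
  operator limits and derivatives identifies any other inverse, logarithm,
  derivative and commutator sum with these series.\<close>

section \<open>Bounds on l2 norms\<close>

text \<open>Bounding every finite partial sum of the squared moduli avoids carrying
  summability side conditions through the estimates; by l2_bound_ell2 and
  ell2_l2_bound it amounts to lying in l2 with norm at most c.\<close>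

definition l2_bound :: "('a \<Rightarrow> complex) \<Rightarrow> real \<Rightarrow> bool" where
  "l2_bound h c \<longleftrightarrow> (\<forall>F. finite F \<longrightarrow> L2_set (\<lambda>x. cmod (h x)) F \<le> c)"

lemma l2_bound_nonneg: "l2_bound h c \<Longrightarrow> 0 \<le> c"
  unfolding l2_bound_def by (drule spec[of _ "{}"]) simp

lemma l2_bound_mono: "l2_bound h c \<Longrightarrow> c \<le> d \<Longrightarrow> l2_bound h d"
  unfolding l2_bound_def by force

lemma l2_bound_norm_le: "l2_bound h c \<Longrightarrow> cmod (h x) \<le> c"
  unfolding l2_bound_def by (drule spec[of _ "{x}"]) simp

lemma l2_bound_zero: "l2_bound (\<lambda>x. 0) 0"
  unfolding l2_bound_def by (simp add: L2_set_0')

lemma l2_bound_sum_squares_le: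
  assumes "l2_bound g a" "finite F"
  shows "(\<Sum>x\<in>F. (cmod (g x))\<^sup>2) \<le> a\<^sup>2"
proof -
  have "sqrt (\<Sum>x\<in>F. (cmod (g x))\<^sup>2) \<le> a"
    using assms unfolding l2_bound_def L2_set_def by blast
  then show ?thesis
    by (metis power_mono real_sqrt_ge_zero real_sqrt_pow2 sum_nonneg zero_le_power2)
qed

lemma l2_bound_sum_squaresI:
  "0 \<le> c \<Longrightarrow> (\<And>F. finite F \<Longrightarrow> (\<Sum>x\<in>F. (cmod (h x))\<^sup>2) \<le> c\<^sup>2) \<Longrightarrow> l2_bound h c"
  unfolding l2_bound_def L2_set_def by (metis real_sqrt_abs real_sqrt_le_mono abs_of_nonneg)

lemma l2_bound_pointwise:
  assumes g: "l2_bound g a" and c: "0 \<le> c" and le: "\<And>x. cmod (h x) \<le> c * cmod (g x)"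
  shows "l2_bound h (c * a)"
  unfolding l2_bound_def
proof (intro allI impI)
  fix F :: "'a set" assume F: "finite F"
  have "L2_set (\<lambda>x. cmod (h x)) F \<le> L2_set (\<lambda>x. c * cmod (g x)) F"
    by (rule L2_set_mono) (auto simp: le)
  also have "\<dots> = c * L2_set (\<lambda>x. cmod (g x)) F"
    using c by (simp add: L2_set_right_distrib)
  also have "\<dots> \<le> c * a"
    using g F c unfolding l2_bound_def by (simp add: mult_left_mono)
  finally show "L2_set (\<lambda>x. cmod (h x)) F \<le> c * a" .
qed

lemma l2_bound_add:
  assumes h: "l2_bound h a" and k: "l2_bound k b"
  shows "l2_bound (\<lambda>x. h x + k x) (a + b)"
  unfolding l2_bound_def
proof (intro allI impI)
  fix F :: "'a set" assume F: "finite F"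
  have "L2_set (\<lambda>x. cmod (h x + k x)) F \<le> L2_set (\<lambda>x. cmod (h x) + cmod (k x)) F"
    by (rule L2_set_mono) (auto simp: norm_triangle_ineq)
  also have "\<dots> \<le> L2_set (\<lambda>x. cmod (h x)) F + L2_set (\<lambda>x. cmod (k x)) F"
    by (rule L2_set_triangle_ineq)
  also have "\<dots> \<le> a + b"
    using h k F unfolding l2_bound_def by (simp add: add_mono)
  finally show "L2_set (\<lambda>x. cmod (h x + k x)) F \<le> a + b" .
qed

lemma l2_bound_scale: "l2_bound h a \<Longrightarrow> l2_bound (\<lambda>x. c * h x) (cmod c * a)"
  by (rule l2_bound_pointwise) (auto simp: norm_mult)

lemma l2_bound_scale_le:
  assumes "l2_bound h a" "cmod c \<le> d"
  shows "l2_bound (\<lambda>x. c * h x) (d * a)"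
  using l2_bound_scale[OF assms(1), of c] l2_bound_nonneg[OF assms(1)] assms(2)
  by (auto elim!: l2_bound_mono intro: mult_right_mono)

lemma norm_inverse_Suc: "cmod (1 / of_nat (Suc m)) = 1 / real (Suc m)"
  by (simp add: norm_divide del: of_nat_Suc)

lemma l2_bound_uminus: "l2_bound h a \<Longrightarrow> l2_bound (\<lambda>x. - h x) a"
  unfolding l2_bound_def by simp

lemma l2_bound_diff: "l2_bound h a \<Longrightarrow> l2_bound k b \<Longrightarrow> l2_bound (\<lambda>x. h x - k x) (a + b)"
  using l2_bound_add[of h a "\<lambda>x. - k x" b] l2_bound_uminus[of k b] by simp

lemma l2_bound_sum:
  "finite I \<Longrightarrow> (\<And>i. i \<in> I \<Longrightarrow> l2_bound (h i) (b i))
    \<Longrightarrow> l2_bound (\<lambda>x. \<Sum>i\<in>I. h i x) (\<Sum>i\<in>I. b i)"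
proof (induction I rule: finite_induct)
  case empty
  then show ?case using l2_bound_zero by simp
next
  case (insert i I)
  then show ?case
    using l2_bound_add[of "h i" "b i" "\<lambda>x. \<Sum>i\<in>I. h i x" "\<Sum>i\<in>I. b i"] by simp
qed

lemma l2_bound_LIMSEQ:
  assumes lim: "\<And>x. (\<lambda>n. s n x) \<longlonglongrightarrow> h x" and bound: "\<And>n. l2_bound (s n) c"
  shows "l2_bound h c"
  unfolding l2_bound_def
proof (intro allI impI)
  fix F :: "'a set" assume F: "finite F"
  have "(\<lambda>n. L2_set (\<lambda>x. cmod (s n x)) F) \<longlonglongrightarrow> L2_set (\<lambda>x. cmod (h x)) F"
    unfolding L2_set_def by (intro tendsto_intros lim)
  moreover have "L2_set (\<lambda>x. cmod (s n x)) F \<le> c" for n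
    using bound F unfolding l2_bound_def by blast
  ultimately show "L2_set (\<lambda>x. cmod (h x)) F \<le> c"
    by (meson LIMSEQ_le_const2)
qed

lemma l2_bound_suminf:
  assumes bound: "\<And>n. l2_bound (T n) (b n)" and b: "summable b"
  shows "(\<lambda>n. T n x) sums (\<Sum>n. T n x)" "l2_bound (\<lambda>x. \<Sum>n. T n x) (\<Sum>n. b n)"
proof -
  have summable: "summable (\<lambda>n. T n y)" for y
    by (rule summable_comparison_test[OF _ b]) (auto intro: l2_bound_norm_le[OF bound])
  then show "(\<lambda>n. T n x) sums (\<Sum>n. T n x)"
    by (simp add: summable_sums)
  show "l2_bound (\<lambda>x. \<Sum>n. T n x) (\<Sum>n. b n)"
  proof (rule l2_bound_LIMSEQ)
    show "(\<lambda>N. \<Sum>n<N. T n x) \<longlonglongrightarrow> (\<Sum>n. T n x)" for x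
      using summable summable_LIMSEQ by blast
    have "(\<Sum>n<N. b n) \<le> (\<Sum>n. b n)" for N
      using sum_le_suminf[OF b, of "{..<N}"] l2_bound_nonneg[OF bound] by simp
    then show "l2_bound (\<lambda>x. \<Sum>n<N. T n x) (\<Sum>n. b n)" for N
      by (rule l2_bound_mono[OF l2_bound_sum[OF finite_lessThan bound]])
  qed
qed

lemma ell2_l2_bound:
  assumes "g \<in> ell2"
  shows "l2_bound g (l2norm g)"
  unfolding l2_bound_def
proof (intro allI impI)
  fix F :: "'a set" assume F: "finite F"
  have "(\<Sum>x\<in>F. (cmod (g x))\<^sup>2) \<le> infsum (\<lambda>x. (cmod (g x))\<^sup>2) UNIV"
    using assms F unfolding ell2_def by (intro finite_sum_le_infsum) auto
  then show "L2_set (\<lambda>x. cmod (g x)) F \<le> l2norm g"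
    unfolding L2_set_def l2norm_def by simp
qed

lemma l2_bound_ell2:
  assumes "l2_bound g c"
  shows "g \<in> ell2" "l2norm g \<le> c"
proof -
  have summable: "(\<lambda>x. (cmod (g x))\<^sup>2) summable_on UNIV"
    by (rule nonneg_bdd_above_summable_on)
      (auto intro!: bdd_aboveI[where M="c\<^sup>2"] l2_bound_sum_squares_le[OF assms])
  then show "g \<in> ell2"
    unfolding ell2_def by simp
  have "infsum (\<lambda>x. (cmod (g x))\<^sup>2) UNIV \<le> c\<^sup>2"
    by (rule infsum_le_finite_sums[OF summable]) (simp add: l2_bound_sum_squares_le[OF assms])
  then show "l2norm g \<le> c"
    unfolding l2norm_def using l2_bound_nonneg[OF assms] by (simp add: real_le_lsqrt)
qed

lemma l2norm_nonneg: "0 \<le> l2norm g"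
  unfolding l2norm_def by (simp add: infsum_nonneg)

lemma ell2_norm_le_l2norm: "g \<in> ell2 \<Longrightarrow> cmod (g x) \<le> l2norm g"
  by (rule l2_bound_norm_le[OF ell2_l2_bound])

section \<open>Operator norm bounds and linear operators\<close>

definition op_norm_le :: "'v op \<Rightarrow> real \<Rightarrow> bool" where
  "op_norm_le T c \<longleftrightarrow> 0 \<le> c \<and> (\<forall>g a. l2_bound g a \<longrightarrow> l2_bound (T g) (c * a))"

lemma op_norm_leI:
  "0 \<le> c \<Longrightarrow> (\<And>g a. l2_bound g a \<Longrightarrow> l2_bound (T g) (c * a)) \<Longrightarrow> op_norm_le T c"
  unfolding op_norm_le_def by blast

lemma op_norm_leD: "op_norm_le T c \<Longrightarrow> l2_bound g a \<Longrightarrow> l2_bound (T g) (c * a)"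
  unfolding op_norm_le_def by blast

lemma op_norm_le_nonneg: "op_norm_le T c \<Longrightarrow> 0 \<le> c"
  unfolding op_norm_le_def by blast

lemma op_norm_le_imp_op_bound:
  fixes T :: "'v op"
  assumes "op_norm_le T c"
  shows "op_bound T c"
  unfolding op_bound_def
proof
  fix g :: "'v \<Rightarrow> complex" assume "g \<in> ell2"
  then have "l2_bound (T g) (c * l2norm g)"
    using ell2_l2_bound op_norm_leD[OF assms] by blast
  then show "T g \<in> ell2 \<and> l2norm (T g) \<le> c * l2norm g"
    using l2_bound_ell2 by blast
qed

lemma op_norm_le_mono:
  fixes T :: "'v op"
  assumes T: "op_norm_le T c" and "c \<le> d"
  shows "op_norm_le T d"
proof (rule op_norm_leI)
  show "0 \<le> d" using op_norm_le_nonneg[OF T] \<open>c \<le> d\<close> by linarith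
  fix g :: "'v \<Rightarrow> complex" and a assume "l2_bound g a"
  then show "l2_bound (T g) (d * a)"
    using op_norm_leD[OF T] l2_bound_nonneg \<open>c \<le> d\<close> by (metis l2_bound_mono mult_right_mono)
qed

lemma op_norm_le_comp:
  fixes T S :: "'v op"
  assumes T: "op_norm_le T c" and S: "op_norm_le S d"
  shows "op_norm_le (\<lambda>g. T (S g)) (c * d)"
proof (rule op_norm_leI)
  show "0 \<le> c * d" using op_norm_le_nonneg[OF T] op_norm_le_nonneg[OF S] by simp
  fix g :: "'v \<Rightarrow> complex" and a assume "l2_bound g a"
  then show "l2_bound (T (S g)) (c * d * a)"
    using op_norm_leD[OF T] op_norm_leD[OF S] by (metis mult.assoc)
qed

lemma op_norm_le_funpow: "op_norm_le T c \<Longrightarrow> op_norm_le (T ^^ n) (c ^ n)"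
proof (induction n)
  case 0
  then show ?case by (simp add: op_norm_le_def)
next
  case (Suc n)
  then show ?case using op_norm_le_comp[of T c "T ^^ n" "c ^ n"] by simp
qed

definition linear_op :: "'v op \<Rightarrow> bool" where
  "linear_op T \<longleftrightarrow> (\<forall>g h. T (\<lambda>x. g x + h x) = (\<lambda>x. T g x + T h x))
     \<and> (\<forall>c g. T (\<lambda>x. c * g x) = (\<lambda>x. c * T g x))"

lemma linear_op_add: "linear_op T \<Longrightarrow> T (\<lambda>x. g x + h x) = (\<lambda>x. T g x + T h x)"
  unfolding linear_op_def by blast

lemma linear_op_scale: "linear_op T \<Longrightarrow> T (\<lambda>x. c * g x) = (\<lambda>x. c * T g x)"
  unfolding linear_op_def by blast

lemma linear_op_uminus: "linear_op T \<Longrightarrow> T (\<lambda>x. - g x) = (\<lambda>x. - T g x)"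
  using linear_op_scale[of T "-1" g] by simp

lemma linear_op_diff: "linear_op T \<Longrightarrow> T (\<lambda>x. g x - h x) = (\<lambda>x. T g x - T h x)"
  using linear_op_add[of T g "\<lambda>x. - h x"] linear_op_uminus[of T h] by simp

lemma linear_op_zero: "linear_op T \<Longrightarrow> T (\<lambda>x. 0) = (\<lambda>x. 0)"
  using linear_op_scale[of T 0 "\<lambda>x. 0"] by simp

lemma linear_op_sum:
  assumes T: "linear_op T" and I: "finite I"
  shows "T (\<lambda>x. \<Sum>i\<in>I. g i x) = (\<lambda>x. \<Sum>i\<in>I. T (g i) x)"
  using I
proof (induction I rule: finite_induct)
  case empty
  then show ?case using linear_op_zero[OF T] by simp
next
  case (insert i I)
  then show ?case using linear_op_add[OF T, of "g i" "\<lambda>x. \<Sum>i\<in>I. g i x"] by simp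
qed

lemma linear_op_funpow: "linear_op T \<Longrightarrow> linear_op (T ^^ n)"
  by (induction n) (simp_all add: linear_op_def)

section \<open>Series and derivatives of operators\<close>

definition op_suminf :: "(nat \<Rightarrow> 'v op) \<Rightarrow> 'v op" where
  "op_suminf T = (\<lambda>g x. \<Sum>n. T n g x)"

lemma op_suminf_sums:
  assumes "\<And>n. op_norm_le (T n) (b n)" "summable b" "l2_bound g a"
  shows "(\<lambda>n. T n g x) sums (op_suminf T g x)"
  unfolding op_suminf_def
  by (rule l2_bound_suminf(1)[where b="\<lambda>n. b n * a"])
    (auto intro: op_norm_leD[OF assms(1) assms(3)] summable_mult2[OF assms(2)])

lemma op_norm_le_op_suminf:
  fixes T :: "nat \<Rightarrow> 'v op"
  assumes T: "\<And>n. op_norm_le (T n) (b n)" and b: "summable b"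
  shows "op_norm_le (op_suminf T) (\<Sum>n. b n)"
proof (rule op_norm_leI)
  show "0 \<le> (\<Sum>n. b n)" by (rule suminf_nonneg[OF b op_norm_le_nonneg[OF T]])
  fix g :: "'v \<Rightarrow> complex" and a assume g: "l2_bound g a"
  have "l2_bound (\<lambda>x. \<Sum>n. T n g x) (\<Sum>n. b n * a)"
    by (rule l2_bound_suminf(2)) (auto intro: op_norm_leD[OF T g] summable_mult2[OF b])
  then show "l2_bound (op_suminf T g) ((\<Sum>n. b n) * a)"
    unfolding op_suminf_def using suminf_mult2[OF b] by simp
qed

lemma op_sums_op_suminf:
  fixes T :: "nat \<Rightarrow> 'v op"
  assumes T: "\<And>n. op_norm_le (T n) (b n)" and b: "summable b"
  shows "op_sums T (op_suminf T)"
  unfolding op_sums_def op_tendsto_def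
proof (intro allI impI)
  fix e :: real assume "e > 0"
  then obtain N0 where N0: "\<And>N. N \<ge> N0 \<Longrightarrow> norm (\<Sum>n. b (n + N)) < e"
    using suminf_exist_split[OF _ b] by blast
  have tail_bound: "op_norm_le (op_diff (\<lambda>g x. \<Sum>n<N. T n g x) (op_suminf T)) (\<Sum>n. b (n + N))" for N
  proof -
    have b_tail: "summable (\<lambda>n. b (n + N))"
      using b by (rule summable_ignore_initial_segment)
    have "op_diff (\<lambda>g x. \<Sum>n<N. T n g x) (op_suminf T) g = (\<lambda>x. - op_suminf (\<lambda>n. T (n + N)) g x)"
      if "l2_bound g a" for g a
      using suminf_split_initial_segment[OF sums_summable[OF op_suminf_sums[OF T b that]], of _ N]
      by (auto simp: op_diff_def op_suminf_def fun_eq_iff)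
    moreover have "op_norm_le (op_suminf (\<lambda>n. T (n + N))) (\<Sum>n. b (n + N))"
      using op_norm_le_op_suminf[OF T b_tail] .
    ultimately show ?thesis
      unfolding op_norm_le_def by (auto intro: l2_bound_uminus)
  qed
  have "op_bound (op_diff (\<lambda>g x. \<Sum>n<N. T n g x) (op_suminf T)) e" if "N \<ge> N0" for N
    using N0[OF that] by (intro op_norm_le_imp_op_bound op_norm_le_mono[OF tail_bound]) simp
  then show "eventually (\<lambda>N. op_bound (op_diff (\<lambda>g x. \<Sum>n<N. T n g x) (op_suminf T)) e) sequentially"
    unfolding eventually_sequentially by blast
qed

lemma op_bound_norm_le: "op_bound T c \<Longrightarrow> g \<in> ell2 \<Longrightarrow> cmod (T g x) \<le> c * l2norm g"
  unfolding op_bound_def by (meson ell2_norm_le_l2norm order_trans)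

lemma op_sums_imp_sums:
  fixes T :: "nat \<Rightarrow> 'v op"
  assumes S: "op_sums T S" and g: "g \<in> ell2"
  shows "(\<lambda>n. T n g x) sums (S g x)"
  unfolding sums_def tendsto_iff
proof (intro allI impI)
  fix e :: real assume e: "e > 0"
  define \<epsilon> where "\<epsilon> = e / (l2norm g + 1)"
  have "\<epsilon> > 0"
    unfolding \<epsilon>_def using e l2norm_nonneg[of g] by simp
  then have "eventually (\<lambda>N. op_bound (op_diff (\<lambda>g x. \<Sum>n<N. T n g x) S) \<epsilon>) sequentially"
    using S unfolding op_sums_def op_tendsto_def by blast
  then show "eventually (\<lambda>N. dist (\<Sum>n<N. T n g x) (S g x) < e) sequentially"
  proof (rule eventually_mono)
    fix N assume "op_bound (op_diff (\<lambda>g x. \<Sum>n<N. T n g x) S) \<epsilon>"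
    from op_bound_norm_le[OF this g, of x]
    have "cmod ((\<Sum>n<N. T n g x) - S g x) \<le> \<epsilon> * l2norm g"
      unfolding op_diff_def .
    also have "\<dots> < e"
      unfolding \<epsilon>_def using e l2norm_nonneg[of g] by (simp add: field_simps)
    finally show "dist (\<Sum>n<N. T n g x) (S g x) < e"
      by (simp add: dist_norm)
  qed
qed

lemma op_sums_unique:
  fixes T :: "nat \<Rightarrow> 'v op"
  assumes "op_sums T S" "op_sums T S'" "g \<in> ell2"
  shows "S g = S' g"
  using sums_unique2[OF op_sums_imp_sums[OF assms(1,3)] op_sums_imp_sums[OF assms(2,3)]] by blast

lemma op_has_derivI:
  assumes d: "0 < d" and K: "0 \<le> K"
    and bound: "\<And>h. h \<noteq> 0 \<Longrightarrow> cmod h < d \<Longrightarrow>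
       op_norm_le (\<lambda>g x. (F (u + h) g x - F u g x) / h - D g x) (cmod h * K)"
  shows "op_has_deriv F D u"
  unfolding op_has_deriv_def
proof (intro allI impI)
  fix e :: real assume e: "e > 0"
  show "\<exists>\<delta>>0. \<forall>h. h \<noteq> 0 \<and> cmod h < \<delta> \<longrightarrow> op_bound (\<lambda>g x. (F (u + h) g x - F u g x) / h - D g x) e"
  proof (intro exI[of _ "min d (e / (K + 1))"] conjI allI impI)
    show "0 < min d (e / (K + 1))" using d e K by simp
    fix h assume h: "h \<noteq> 0 \<and> cmod h < min d (e / (K + 1))"
    have "cmod h * K \<le> cmod h * (K + 1)"
      by (simp add: mult_left_mono)
    also have "\<dots> < e"
      using h K by (simp add: pos_less_divide_eq)
    finally have "cmod h * K \<le> e" by simp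
    with h show "op_bound (\<lambda>g x. (F (u + h) g x - F u g x) / h - D g x) e"
      by (intro op_norm_le_imp_op_bound op_norm_le_mono[OF bound]) auto
  qed
qed

lemma op_has_deriv_unique:
  fixes L L' :: "complex \<Rightarrow> 'v op"
  assumes L: "op_has_deriv L D u" and L': "op_has_deriv L' D' u" and r: "r > 0"
    and eq: "\<And>v g. cmod (v - u) < r \<Longrightarrow> g \<in> ell2 \<Longrightarrow> L v g = L' v g" and g: "g \<in> ell2"
  shows "D g = D' g"
proof
  fix x
  let ?k = "l2norm g"
  have "cmod (D g x - D' g x) \<le> 0 + e" if e: "e > 0" for e
  proof -
    define \<epsilon> where "\<epsilon> = e / (2 * (?k + 1))"
    have "\<epsilon> > 0" unfolding \<epsilon>_def using e l2norm_nonneg[of g] by simp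
    then obtain d d' where "d > 0" "d' > 0"
      and d: "\<And>h. h \<noteq> 0 \<and> cmod h < d \<Longrightarrow> op_bound (\<lambda>g x. (L (u + h) g x - L u g x) / h - D g x) \<epsilon>"
      and d': "\<And>h. h \<noteq> 0 \<and> cmod h < d' \<Longrightarrow> op_bound (\<lambda>g x. (L' (u + h) g x - L' u g x) / h - D' g x) \<epsilon>"
      using L L' unfolding op_has_deriv_def by blast
    define h where "h = complex_of_real (min (min d d') r / 2)"
    have h: "h \<noteq> 0" "cmod h < d" "cmod h < d'" "cmod h < r"
      unfolding h_def using \<open>d > 0\<close> \<open>d' > 0\<close> r by auto
    have "L (u + h) g = L' (u + h) g" "L u g = L' u g"
      using eq g h r by auto
    then have "D g x - D' g x = ((L' (u + h) g x - L' u g x) / h - D' g x)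
        - ((L (u + h) g x - L u g x) / h - D g x)"
      by simp
    then have "cmod (D g x - D' g x) \<le> cmod ((L' (u + h) g x - L' u g x) / h - D' g x)
        + cmod ((L (u + h) g x - L u g x) / h - D g x)"
      by (simp only: norm_triangle_ineq4)
    also have "\<dots> \<le> \<epsilon> * ?k + \<epsilon> * ?k"
      using h by (intro add_mono op_bound_norm_le[OF d'] op_bound_norm_le[OF d] g) auto
    also have "\<dots> \<le> 2 * (\<epsilon> * (?k + 1))"
      using \<open>\<epsilon> > 0\<close> by simp
    also have "\<dots> = 0 + e"
      unfolding \<epsilon>_def using l2norm_nonneg[of g] by (simp add: field_simps)
    finally show ?thesis .
  qed
  then have "cmod (D g x - D' g x) \<le> 0"
    by (rule field_le_epsilon)
  then show "D g x = D' g x" by simp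
qed

lemma linear_op_opA: "linear_op (opA Adj)"
  unfolding linear_op_def opA_def by (simp add: sum.distrib sum_distrib_left)

lemma linear_op_opQ: "linear_op (opQ Adj)"
  unfolding linear_op_def opQ_def by (simp add: algebra_simps)

lemma linear_op_fop: "linear_op (fop Adj u)"
  unfolding linear_op_def fop_def
  by (simp add: linear_op_add[OF linear_op_opA] linear_op_scale[OF linear_op_opA]
      linear_op_add[OF linear_op_opQ] linear_op_scale[OF linear_op_opQ] algebra_simps)

lemma linear_op_fop': "linear_op (fop' Adj u)"
  unfolding linear_op_def fop'_def
  by (simp add: linear_op_add[OF linear_op_opA] linear_op_scale[OF linear_op_opA]
      linear_op_add[OF linear_op_opQ] linear_op_scale[OF linear_op_opQ] algebra_simps)

text \<open>A and Q act at each vertex through finitely many values, so they commute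
  with pointwise convergent series.\<close>

lemma sums_opA: "(\<And>y. (\<lambda>m. s m y) sums h y) \<Longrightarrow> (\<lambda>m. opA Adj (s m) x) sums (opA Adj h x)"
  unfolding opA_def by (rule sums_sum) simp

lemma sums_opQ: "(\<And>y. (\<lambda>m. s m y) sums h y) \<Longrightarrow> (\<lambda>m. opQ Adj (s m) x) sums (opQ Adj h x)"
  unfolding opQ_def by (rule sums_mult) simp

lemma sums_fop: "(\<And>y. (\<lambda>m. s m y) sums h y) \<Longrightarrow> (\<lambda>m. fop Adj u (s m) x) sums (fop Adj u h x)"
  unfolding fop_def by (intro sums_diff sums_mult sums_opA sums_opQ)

lemma sums_fop': "(\<And>y. (\<lambda>m. s m y) sums h y) \<Longrightarrow> (\<lambda>m. fop' Adj u (s m) x) sums (fop' Adj u h x)"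
  unfolding fop'_def by (intro sums_diff sums_mult sums_opA sums_opQ)

lemma fop_add_eq: "fop Adj (u + h) g x = fop Adj u g x + h * fop' Adj u g x - h\<^sup>2 * opQ Adj g x"
  unfolding fop_def fop'_def by (simp add: power2_eq_square algebra_simps)

lemma fop'_fop_commute:
  "fop' Adj u (fop Adj u g) = (\<lambda>x. fop Adj u (fop' Adj u g) x + u\<^sup>2 * commAQ Adj g x)"
  unfolding fop'_def fop_def commAQ_def
    linear_op_add[OF linear_op_opA] linear_op_scale[OF linear_op_opA] linear_op_diff[OF linear_op_opA]
    linear_op_add[OF linear_op_opQ] linear_op_scale[OF linear_op_opQ] linear_op_diff[OF linear_op_opQ]
  by (rule ext) (simp add: algebra_simps power2_eq_square)

section \<open>Moving f' across the powers of f\<close>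

text \<open>The derivative of f(u)^n, obtained from the product rule applied to
  f^(n+1) = f^n followed by f.\<close>

primrec fpow_deriv :: "('v \<Rightarrow> 'v \<Rightarrow> bool) \<Rightarrow> complex \<Rightarrow> nat \<Rightarrow> 'v op" where
  "fpow_deriv Adj u 0 = (\<lambda>g x. 0)"
| "fpow_deriv Adj u (Suc n) =
     (\<lambda>g x. fop' Adj u ((fop Adj u ^^ n) g) x + fop Adj u (fpow_deriv Adj u n g) x)"

definition comm_sum :: "('v \<Rightarrow> 'v \<Rightarrow> bool) \<Rightarrow> complex \<Rightarrow> nat \<Rightarrow> 'v op" where
  "comm_sum Adj u m g = (\<lambda>x. \<Sum>j\<in>{1..m}. of_nat j *
     ((fop Adj u ^^ (m - j)) (commAQ Adj ((fop Adj u ^^ (j - 1)) g))) x)"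

lemma comm_term_eq: "comm_term Adj u m g x = 1 / of_nat (Suc m) * comm_sum Adj u m g x"
  unfolding comm_term_def comm_sum_def by simp

lemma comm_sum_Suc:
  "comm_sum Adj u (Suc m) g =
     (\<lambda>x. fop Adj u (comm_sum Adj u m g) x + of_nat (Suc m) * commAQ Adj ((fop Adj u ^^ m) g) x)"
proof -
  let ?f = "fop Adj u"
  let ?C = "\<lambda>j. commAQ Adj ((?f ^^ (j - 1)) g)"
  have "?f ^^ (Suc m - j) = ?f \<circ> (?f ^^ (m - j))" if "j \<in> {1..m}" for j
    using that by (simp add: Suc_diff_le)
  then have "comm_sum Adj u (Suc m) g =
      (\<lambda>x. (\<Sum>j\<in>{1..m}. of_nat j * ?f ((?f ^^ (m - j)) (?C j)) x)
        + of_nat (Suc m) * commAQ Adj ((?f ^^ m) g) x)"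
    unfolding comm_sum_def by (intro ext arg_cong2[where f="(+)"] sum.cong) auto
  also have "\<dots> = (\<lambda>x. ?f (comm_sum Adj u m g) x + of_nat (Suc m) * commAQ Adj ((?f ^^ m) g) x)"
    unfolding comm_sum_def
    by (simp add: linear_op_sum[OF linear_op_fop] linear_op_scale[OF linear_op_fop])
  finally show ?thesis .
qed

lemma fop'_fpow_minus_fpow_deriv:
  "(\<lambda>x. of_nat (Suc m) * fop' Adj u ((fop Adj u ^^ m) g) x - fpow_deriv Adj u (Suc m) g x)
     = (\<lambda>x. u\<^sup>2 * comm_sum Adj u m g x)"
proof (induction m)
  case 0
  then show ?case by (simp add: comm_sum_def linear_op_zero[OF linear_op_fop])
next
  case (Suc m)
  let ?f = "fop Adj u" and ?f' = "fop' Adj u"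
  let ?h = "(?f ^^ m) g"
  have "(\<lambda>x. of_nat (Suc (Suc m)) * ?f' ((?f ^^ Suc m) g) x - fpow_deriv Adj u (Suc (Suc m)) g x)
      = (\<lambda>x. of_nat (Suc m) * ?f' (?f ?h) x - ?f (fpow_deriv Adj u (Suc m) g) x)"
    by (simp add: algebra_simps)
  also have "\<dots> = (\<lambda>x. of_nat (Suc m) * (?f (?f' ?h) x + u\<^sup>2 * commAQ Adj ?h x)
          - ?f (fpow_deriv Adj u (Suc m) g) x)"
    by (simp add: fop'_fop_commute)
  also have "\<dots> = (\<lambda>x. ?f (\<lambda>x. of_nat (Suc m) * ?f' ?h x - fpow_deriv Adj u (Suc m) g x) x
        + of_nat (Suc m) * u\<^sup>2 * commAQ Adj ?h x)"
    by (simp add: linear_op_diff[OF linear_op_fop] linear_op_scale[OF linear_op_fop]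
        linear_op_add[OF linear_op_fop] algebra_simps)
  also have "\<dots> = (\<lambda>x. ?f (\<lambda>x. u\<^sup>2 * comm_sum Adj u m g x) x
        + of_nat (Suc m) * u\<^sup>2 * commAQ Adj ?h x)"
    by (simp only: Suc.IH)
  also have "\<dots> = (\<lambda>x. u\<^sup>2 * comm_sum Adj u (Suc m) g x)"
    by (simp add: comm_sum_Suc linear_op_scale[OF linear_op_fop] algebra_simps)
  finally show ?case .
qed

lemma fop'_fpow_eq:
  "fop' Adj u ((fop Adj u ^^ m) g) x =
     1 / of_nat (Suc m) * fpow_deriv Adj u (Suc m) g x + u\<^sup>2 * comm_term Adj u m g x"
proof -
  have "of_nat (Suc m) * fop' Adj u ((fop Adj u ^^ m) g) x - fpow_deriv Adj u (Suc m) g x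
      = u\<^sup>2 * comm_sum Adj u m g x"
    using fop'_fpow_minus_fpow_deriv[of m Adj u g] by (simp add: fun_eq_iff)
  then show ?thesis
    unfolding comm_term_eq by (simp add: field_simps del: of_nat_Suc)
qed

definition fpow_deriv_error :: "('v \<Rightarrow> 'v \<Rightarrow> bool) \<Rightarrow> complex \<Rightarrow> complex \<Rightarrow> nat \<Rightarrow> 'v op" where
  "fpow_deriv_error Adj u h n g x =
     ((fop Adj (u + h) ^^ n) g x - (fop Adj u ^^ n) g x) / h - fpow_deriv Adj u n g x"

lemma fpow_deriv_error_Suc:
  assumes "h \<noteq> 0"
  shows "fpow_deriv_error Adj u h (Suc n) g = (\<lambda>x. fop Adj u (fpow_deriv_error Adj u h n g) x
      + fop' Adj u (\<lambda>y. (fop Adj (u + h) ^^ n) g y - (fop Adj u ^^ n) g y) x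
      - h * opQ Adj ((fop Adj (u + h) ^^ n) g) x)"
proof
  fix x
  let ?P = "(fop Adj (u + h) ^^ n) g" and ?F = "(fop Adj u ^^ n) g"
  have "fpow_deriv_error Adj u h n g = (\<lambda>x. 1 / h * (?P x - ?F x) - fpow_deriv Adj u n g x)"
    unfolding fpow_deriv_error_def by (simp add: fun_eq_iff)
  then have f_error: "fop Adj u (fpow_deriv_error Adj u h n g) x
      = 1 / h * (fop Adj u ?P x - fop Adj u ?F x) - fop Adj u (fpow_deriv Adj u n g) x"
    by (simp only: linear_op_diff[OF linear_op_fop] linear_op_scale[OF linear_op_fop])
  have f'_diff: "fop' Adj u (\<lambda>y. ?P y - ?F y) x = fop' Adj u ?P x - fop' Adj u ?F x"
    by (simp add: linear_op_diff[OF linear_op_fop'])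
  have "fpow_deriv_error Adj u h (Suc n) g x
      = ((fop Adj u ?P x + h * fop' Adj u ?P x - h\<^sup>2 * opQ Adj ?P x) - fop Adj u ?F x) / h
        - (fop' Adj u ?F x + fop Adj u (fpow_deriv Adj u n g) x)"
    unfolding fpow_deriv_error_def by (simp add: fop_add_eq)
  also have "\<dots> = fop Adj u (fpow_deriv_error Adj u h n g) x
      + fop' Adj u (\<lambda>y. ?P y - ?F y) x - h * opQ Adj ?P x"
    unfolding f_error f'_diff using assms by (simp add: field_simps power2_eq_square)
  finally show "fpow_deriv_error Adj u h (Suc n) g x = fop Adj u (fpow_deriv_error Adj u h n g) x
      + fop' Adj u (\<lambda>y. ?P y - ?F y) x - h * opQ Adj ?P x" .
qed

lemma fpow_deriv_error_1:
  assumes "h \<noteq> 0"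
  shows "fpow_deriv_error Adj u h 1 g = (\<lambda>x. (- h) * opQ Adj g x)"
proof -
  have "fpow_deriv_error Adj u h 0 g = (\<lambda>x. 0)"
    by (simp add: fpow_deriv_error_def fun_eq_iff)
  then show ?thesis
    unfolding One_nat_def fpow_deriv_error_Suc[OF assms]
    by (simp add: linear_op_zero[OF linear_op_fop] linear_op_zero[OF linear_op_fop'])
qed

lemma quadratic_bound_step:
  fixes C q F N M :: real
  assumes "0 < q" "0 \<le> F" "0 \<le> M" "0 \<le> N" "M * q + F \<le> C * q"
  shows "q * C * (N + 1)\<^sup>2 + F * (N + 1) + M * q \<le> C * (N + 2)\<^sup>2 * q"
proof -
  have "C * (N + 2)\<^sup>2 * q - (q * C * (N + 1)\<^sup>2 + F * (N + 1) + M * q)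
      = C * q * (2 * N + 3) - F * (N + 1) - M * q"
    by (simp add: power2_eq_square algebra_simps)
  also have "\<dots> \<ge> (M * q + F) * (2 * N + 3) - F * (N + 1) - M * q"
    using assms by (intro diff_right_mono mult_right_mono) auto
  moreover have "(M * q + F) * (2 * N + 3) - F * (N + 1) - M * q \<ge> 0"
    using assms by (simp add: algebra_simps)
  ultimately show ?thesis by linarith
qed

section \<open>Norm estimates for graphs of bounded degree\<close>

lemma alpha_squared:
  assumes "0 \<le> sup_deg Adj"
  shows "(alpha Adj)\<^sup>2 = sup_deg Adj * alpha Adj + sup_deg Adj"
proof -
  define M where "M = sup_deg Adj"
  have "(sqrt (M\<^sup>2 + 4 * M))\<^sup>2 = M\<^sup>2 + 4 * M"
    using assms unfolding M_def by simp
  then show ?thesis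
    unfolding alpha_def M_def[symmetric] by (simp add: power2_eq_square field_simps)
qed

locale bounded_degree_graph =
  fixes Adj :: "'v \<Rightarrow> 'v \<Rightarrow> bool"
  assumes sym: "\<And>x y. Adj x y \<Longrightarrow> Adj y x"
    and finite_neighbours: "\<And>x. finite {y. Adj x y}"
    and bdd_above_deg: "bdd_above (range (deg Adj))"
    and sup_deg_ge_1: "1 \<le> sup_deg Adj"
begin

abbreviation M :: real where "M \<equiv> sup_deg Adj"

lemma deg_le_sup_deg: "real (deg Adj x) \<le> M"
  unfolding sup_deg_def using cSup_upper[OF rangeI bdd_above_deg] by simp

lemma sup_deg_nonneg: "0 \<le> M"
  using sup_deg_ge_1 by simp

lemma opA_norm_squared_le:
  "(cmod (opA Adj g x))\<^sup>2 \<le> M * (\<Sum>y | Adj x y. (cmod (g y))\<^sup>2)"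
proof -
  have "(cmod (opA Adj g x))\<^sup>2 \<le> (\<Sum>y | Adj x y. cmod (g y))\<^sup>2"
    unfolding opA_def by (simp add: norm_sum power_mono)
  also have "\<dots> \<le> (\<Sum>y | Adj x y. (cmod (g y))\<^sup>2) * deg Adj x"
    unfolding deg_def by (rule sum_squared_le_sum_of_squares)
  also have "\<dots> \<le> (\<Sum>y | Adj x y. (cmod (g y))\<^sup>2) * M"
    using deg_le_sup_deg by (intro mult_left_mono) (auto simp: sum_nonneg)
  finally show ?thesis by (simp add: mult.commute)
qed

text \<open>Each vertex is a neighbour of at most M vertices, so summing the
  pointwise estimate counts every square at most M times.\<close>

lemma op_norm_le_opA: "op_norm_le (opA Adj) M"
proof (rule op_norm_leI[OF sup_deg_nonneg])
  fix g :: "'v \<Rightarrow> complex" and a assume g: "l2_bound g a"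
  show "l2_bound (opA Adj g) (M * a)"
  proof (rule l2_bound_sum_squaresI)
    show "0 \<le> M * a" using l2_bound_nonneg[OF g] sup_deg_nonneg by simp
    fix F :: "'v set" assume F: "finite F"
    define G where "G = (\<Union>x\<in>F. {y. Adj x y})"
    have G: "finite G"
      unfolding G_def using F finite_neighbours by simp
    have in_degree: "real (card {x. x \<in> F \<and> Adj x y}) \<le> M" for y
    proof -
      have "card {x. x \<in> F \<and> Adj x y} \<le> deg Adj y"
        unfolding deg_def using sym finite_neighbours by (intro card_mono) auto
      then show ?thesis using deg_le_sup_deg[of y] by linarith
    qed
    have "(\<Sum>x\<in>F. (cmod (opA Adj g x))\<^sup>2) \<le> (\<Sum>x\<in>F. M * (\<Sum>y | Adj x y. (cmod (g y))\<^sup>2))"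
      by (rule sum_mono) (rule opA_norm_squared_le)
    also have "\<dots> = M * (\<Sum>x\<in>F. \<Sum>y | y \<in> G \<and> Adj x y. (cmod (g y))\<^sup>2)"
      unfolding sum_distrib_left G_def by (intro sum.cong arg_cong2[where f=sum]) auto
    also have "\<dots> = M * (\<Sum>y\<in>G. card {x. x \<in> F \<and> Adj x y} * (cmod (g y))\<^sup>2)"
      using sum.swap_restrict[OF F G, of "\<lambda>x y. (cmod (g y))\<^sup>2" Adj] by simp
    also have "\<dots> \<le> M * (\<Sum>y\<in>G. M * (cmod (g y))\<^sup>2)"
      using in_degree by (intro mult_left_mono sum_mono sup_deg_nonneg mult_right_mono) auto
    also have "\<dots> \<le> M * (M * a\<^sup>2)"
      using l2_bound_sum_squares_le[OF g G] sup_deg_nonneg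
      by (auto simp: sum_distrib_left[symmetric] intro!: mult_left_mono)
    also have "\<dots> = (M * a)\<^sup>2"
      by (simp add: power2_eq_square)
    finally show "(\<Sum>x\<in>F. (cmod (opA Adj g x))\<^sup>2) \<le> (M * a)\<^sup>2" .
  qed
qed

text \<open>Here M \<ge> 1 is needed: an isolated vertex contributes the factor 1.\<close>

lemma op_norm_le_opQ: "op_norm_le (opQ Adj) M"
proof (rule op_norm_leI[OF sup_deg_nonneg])
  fix g :: "'v \<Rightarrow> complex" and a assume g: "l2_bound g a"
  have "cmod (of_nat (deg Adj x) - 1 :: complex) \<le> M" for x
  proof -
    have "cmod (of_nat (deg Adj x) - 1 :: complex) = \<bar>real (deg Adj x) - 1\<bar>"
      by (metis norm_of_real of_real_1 of_real_diff of_real_of_nat_eq real_norm_def)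
    then show ?thesis using deg_le_sup_deg[of x] sup_deg_ge_1 by linarith
  qed
  then show "l2_bound (opQ Adj g) (M * a)"
    unfolding opQ_def by (intro l2_bound_pointwise[OF g sup_deg_nonneg]) (simp add: norm_mult mult_right_mono)
qed

lemma op_norm_le_commAQ: "op_norm_le (commAQ Adj) (2 * M * M)"
proof (rule op_norm_leI)
  show "0 \<le> 2 * M * M" using sup_deg_nonneg by simp
  fix g :: "'v \<Rightarrow> complex" and a assume g: "l2_bound g a"
  have "l2_bound (\<lambda>x. opA Adj (opQ Adj g) x - opQ Adj (opA Adj g) x) (M * (M * a) + M * (M * a))"
    by (intro l2_bound_diff op_norm_leD[OF op_norm_le_opA] op_norm_leD[OF op_norm_le_opQ] g)
  then show "l2_bound (commAQ Adj g) (2 * M * M * a)"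
    unfolding commAQ_def by (simp add: algebra_simps)
qed

definition f_bound :: "real \<Rightarrow> real" where
  "f_bound t = M * t + M * t\<^sup>2"

definition fderiv_bound :: "real \<Rightarrow> real" where
  "fderiv_bound t = M + 2 * t * M"

lemma f_bound_nonneg: "0 \<le> f_bound (cmod v)"
  unfolding f_bound_def using sup_deg_nonneg by simp

lemma fderiv_bound_nonneg: "0 \<le> fderiv_bound (cmod v)"
  unfolding fderiv_bound_def using sup_deg_nonneg by simp

lemma f_bound_mono: "0 \<le> s \<Longrightarrow> s \<le> t \<Longrightarrow> f_bound s \<le> f_bound t"
  unfolding f_bound_def using sup_deg_nonneg
  by (intro add_mono mult_left_mono power_mono) auto

lemma f_bound_strict_mono: "0 \<le> s \<Longrightarrow> s < t \<Longrightarrow> f_bound s < f_bound t"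
  unfolding f_bound_def using sup_deg_ge_1
  by (intro add_less_le_mono mult_strict_left_mono mult_left_mono power_mono) auto

lemma alpha_pos: "0 < alpha Adj"
  unfolding alpha_def using sup_deg_ge_1 by (simp add: add_pos_nonneg)

lemma f_bound_inverse_alpha: "f_bound (1 / alpha Adj) = 1"
proof -
  have "f_bound (1 / alpha Adj) = (M * alpha Adj + M) / (alpha Adj)\<^sup>2"
    unfolding f_bound_def using alpha_pos by (simp add: power2_eq_square field_simps)
  moreover have "0 < M * alpha Adj + M"
    using alpha_pos sup_deg_ge_1 by (intro add_pos_pos mult_pos_pos) auto
  ultimately show ?thesis
    using alpha_squared[OF sup_deg_nonneg] by simp
qed

lemma f_bound_less_1: "0 \<le> t \<Longrightarrow> t < 1 / alpha Adj \<Longrightarrow> f_bound t < 1"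
  using f_bound_strict_mono f_bound_inverse_alpha by metis

lemma op_norm_le_fop: "op_norm_le (fop Adj v) (f_bound (cmod v))"
proof (rule op_norm_leI[OF f_bound_nonneg])
  fix g :: "'v \<Rightarrow> complex" and a assume g: "l2_bound g a"
  have "l2_bound (\<lambda>x. v * opA Adj g x - v\<^sup>2 * opQ Adj g x) (cmod v * (M * a) + cmod (v\<^sup>2) * (M * a))"
    by (intro l2_bound_diff l2_bound_scale op_norm_leD[OF op_norm_le_opA g] op_norm_leD[OF op_norm_le_opQ g])
  then show "l2_bound (fop Adj v g) (f_bound (cmod v) * a)"
    unfolding fop_def f_bound_def by (simp add: norm_power algebra_simps)
qed

lemma op_norm_le_fop': "op_norm_le (fop' Adj v) (fderiv_bound (cmod v))"
proof (rule op_norm_leI[OF fderiv_bound_nonneg])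
  fix g :: "'v \<Rightarrow> complex" and a assume g: "l2_bound g a"
  have "l2_bound (\<lambda>x. opA Adj g x - (2 * v) * opQ Adj g x) (M * a + cmod (2 * v) * (M * a))"
    by (intro l2_bound_diff l2_bound_scale op_norm_leD[OF op_norm_le_opA g] op_norm_leD[OF op_norm_le_opQ g])
  then show "l2_bound (fop' Adj v g) (fderiv_bound (cmod v) * a)"
    unfolding fop'_def fderiv_bound_def by (simp add: norm_mult algebra_simps)
qed

lemma op_norm_le_fpow: "op_norm_le (fop Adj v ^^ n) (f_bound (cmod v) ^ n)"
  by (rule op_norm_le_funpow[OF op_norm_le_fop])

lemma op_norm_le_fpow_deriv:
  "op_norm_le (fpow_deriv Adj u (Suc n)) (real (Suc n) * fderiv_bound (cmod u) * f_bound (cmod u) ^ n)"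
proof (induction n)
  case 0
  have "fpow_deriv Adj u (Suc 0) = fop' Adj u"
    by (simp add: linear_op_zero[OF linear_op_fop])
  then show ?case using op_norm_le_fop' by simp
next
  case (Suc n)
  let ?r = "f_bound (cmod u)" and ?F = "fderiv_bound (cmod u)"
  show ?case
  proof (rule op_norm_leI)
    show "0 \<le> real (Suc (Suc n)) * ?F * ?r ^ Suc n"
      using f_bound_nonneg fderiv_bound_nonneg by simp
    fix g :: "'v \<Rightarrow> complex" and a assume g: "l2_bound g a"
    have "l2_bound (\<lambda>x. fop' Adj u ((fop Adj u ^^ Suc n) g) x + fop Adj u (fpow_deriv Adj u (Suc n) g) x)
        (?F * (?r ^ Suc n * a) + ?r * (real (Suc n) * ?F * ?r ^ n * a))"
      by (intro l2_bound_add op_norm_leD[OF op_norm_le_fop'] op_norm_leD[OF op_norm_le_fop]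
          op_norm_leD[OF op_norm_le_fpow] op_norm_leD[OF Suc.IH] g)
    then show "l2_bound (fpow_deriv Adj u (Suc (Suc n)) g) (real (Suc (Suc n)) * ?F * ?r ^ Suc n * a)"
      by (simp add: algebra_simps)
  qed
qed

section \<open>The inverse, logarithm and commutator series\<close>

definition neumann_series :: "complex \<Rightarrow> 'v op" where
  "neumann_series u = op_suminf (\<lambda>n. fop Adj u ^^ n)"

definition log_series :: "complex \<Rightarrow> 'v op" where
  "log_series u = op_suminf (log_term Adj u)"

definition log_deriv_term :: "complex \<Rightarrow> nat \<Rightarrow> 'v op" where
  "log_deriv_term u m g x = - (1 / of_nat (Suc m)) * fpow_deriv Adj u (Suc m) g x"

definition log_series_deriv :: "complex \<Rightarrow> 'v op" where
  "log_series_deriv u = op_suminf (log_deriv_term u)"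

definition comm_series :: "complex \<Rightarrow> 'v op" where
  "comm_series u = op_suminf (comm_term Adj u)"

lemma op_norm_le_log_term: "op_norm_le (log_term Adj u m) (f_bound (cmod u) ^ Suc m)"
proof (rule op_norm_leI)
  show "0 \<le> f_bound (cmod u) ^ Suc m"
    using f_bound_nonneg by simp
  fix g :: "'v \<Rightarrow> complex" and a assume g: "l2_bound g a"
  have "cmod (- (1 / of_nat (Suc m))) \<le> (1 :: real)"
    by (simp add: norm_inverse_Suc del: of_nat_Suc)
  from l2_bound_scale_le[OF op_norm_leD[OF op_norm_le_fpow[where v=u and n="Suc m"] g] this]
  show "l2_bound (log_term Adj u m g) (f_bound (cmod u) ^ Suc m * a)"
    unfolding log_term_def by (simp only: mult_1)
qed

lemma op_norm_le_log_deriv_term: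
  "op_norm_le (log_deriv_term u m) (fderiv_bound (cmod u) * f_bound (cmod u) ^ m)"
proof (rule op_norm_leI)
  show "0 \<le> fderiv_bound (cmod u) * f_bound (cmod u) ^ m"
    using f_bound_nonneg fderiv_bound_nonneg by simp
  fix g :: "'v \<Rightarrow> complex" and a assume g: "l2_bound g a"
  have "cmod (- (1 / of_nat (Suc m))) \<le> 1 / real (Suc m)"
    by (simp add: norm_inverse_Suc del: of_nat_Suc)
  from l2_bound_scale_le[OF op_norm_leD[OF op_norm_le_fpow_deriv[of u m] g] this]
  show "l2_bound (log_deriv_term u m g) (fderiv_bound (cmod u) * f_bound (cmod u) ^ m * a)"
    unfolding log_deriv_term_def by (simp add: mult.assoc del: of_nat_Suc)
qed

lemma op_norm_le_comm_term:
  "op_norm_le (comm_term Adj u m) (2 * M * M * real m * f_bound (cmod u) ^ (m - 1))"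
proof (rule op_norm_leI)
  let ?r = "f_bound (cmod u)"
  show "0 \<le> 2 * M * M * real m * ?r ^ (m - 1)"
    using f_bound_nonneg sup_deg_nonneg by simp
  fix g :: "'v \<Rightarrow> complex" and a assume g: "l2_bound g a"
  define c where "c = 2 * M * M * ?r ^ (m - 1) * a"
  have "l2_bound (\<lambda>x. of_nat j * ((fop Adj u ^^ (m - j)) (commAQ Adj ((fop Adj u ^^ (j - 1)) g))) x)
      (real j * c)" if "j \<in> {1..m}" for j
  proof -
    have "?r ^ (m - j) * ?r ^ (j - 1) = ?r ^ (m - 1)"
      using that by (simp flip: power_add)
    moreover note l2_bound_scale[OF op_norm_leD[OF op_norm_le_fpow[where v=u and n="m - j"]
          op_norm_leD[OF op_norm_le_commAQ op_norm_leD[OF op_norm_le_fpow[where v=u and n="j - 1"] g]]], of "of_nat j"]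
    ultimately show ?thesis
      unfolding c_def by (simp add: mult_ac)
  qed
  then have "l2_bound (\<lambda>x. \<Sum>j\<in>{1..m}. of_nat j *
      ((fop Adj u ^^ (m - j)) (commAQ Adj ((fop Adj u ^^ (j - 1)) g))) x) (\<Sum>j\<in>{1..m}. real j * c)"
    by (rule l2_bound_sum[OF finite_atLeastAtMost])
  moreover have "(\<Sum>j\<in>{1..m}. real j * c) \<le> (\<Sum>j\<in>{1..m}. real (Suc m) * c)"
    using f_bound_nonneg sup_deg_nonneg l2_bound_nonneg[OF g]
    unfolding c_def by (intro sum_mono mult_right_mono) auto
  ultimately have sum_bound: "l2_bound (\<lambda>x. \<Sum>j\<in>{1..m}. of_nat j *
      ((fop Adj u ^^ (m - j)) (commAQ Adj ((fop Adj u ^^ (j - 1)) g))) x) (real (Suc m) * (real m * c))"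
    by (auto elim!: l2_bound_mono simp: mult_ac)
  have bound_eq: "1 / real (Suc m) * (real (Suc m) * (real m * c)) = 2 * M * M * real m * ?r ^ (m - 1) * a"
    unfolding c_def by (simp add: field_simps del: of_nat_Suc)
  show "l2_bound (comm_term Adj u m g) (2 * M * M * real m * ?r ^ (m - 1) * a)"
    using l2_bound_scale_le[OF sum_bound eq_refl[OF norm_inverse_Suc[of m]]]
    unfolding comm_term_def bound_eq .
qed

context
  fixes u :: complex
  assumes u: "cmod u < 1 / alpha Adj"
begin

lemma f_bound_norm_less_1: "f_bound (cmod u) < 1"
  using f_bound_less_1[OF norm_ge_zero u] .

lemma summable_f_bound_power: "summable (\<lambda>n. f_bound (cmod u) ^ n)"
  using f_bound_norm_less_1 f_bound_nonneg by (intro summable_geometric) simp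

lemma summable_Suc_times_f_bound_power: "summable (\<lambda>n. real (Suc n) * f_bound (cmod u) ^ n)"
  using sums_summable[OF geometric_deriv_sums[of "f_bound (cmod u)"]] f_bound_norm_less_1 f_bound_nonneg
  by simp

lemma summable_comm_term_bound: "summable (\<lambda>m. 2 * M * M * real m * f_bound (cmod u) ^ (m - 1))"
proof -
  have "summable (\<lambda>m. 2 * M * M * (real (Suc m) * f_bound (cmod u) ^ m))"
    by (intro summable_mult summable_Suc_times_f_bound_power)
  then show ?thesis
    by (subst summable_Suc_iff[symmetric]) (simp only: diff_Suc_1 mult.assoc)
qed

lemma summable_f_bound_power_Suc: "summable (\<lambda>n. f_bound (cmod u) ^ Suc n)"
  using summable_mult[OF summable_f_bound_power, of "f_bound (cmod u)"] by simp

lemma neumann_series_sums: "l2_bound g a \<Longrightarrow> (\<lambda>n. (fop Adj u ^^ n) g x) sums (neumann_series u g x)"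
  unfolding neumann_series_def by (rule op_suminf_sums[OF op_norm_le_fpow summable_f_bound_power])

lemma op_norm_le_neumann_series: "op_norm_le (neumann_series u) (\<Sum>n. f_bound (cmod u) ^ n)"
  unfolding neumann_series_def by (rule op_norm_le_op_suminf[OF op_norm_le_fpow summable_f_bound_power])

lemma log_series_sums: "l2_bound g a \<Longrightarrow> (\<lambda>m. log_term Adj u m g x) sums (log_series u g x)"
  unfolding log_series_def
  by (rule op_suminf_sums[OF op_norm_le_log_term summable_f_bound_power_Suc])

lemma op_sums_log_series: "op_sums (log_term Adj u) (log_series u)"
  unfolding log_series_def
  by (rule op_sums_op_suminf[OF op_norm_le_log_term summable_f_bound_power_Suc])

lemma log_series_deriv_sums:
  "l2_bound g a \<Longrightarrow> (\<lambda>m. log_deriv_term u m g x) sums (log_series_deriv u g x)"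
  unfolding log_series_deriv_def
  by (rule op_suminf_sums[OF op_norm_le_log_deriv_term summable_mult[OF summable_f_bound_power]])

lemma comm_series_sums: "l2_bound g a \<Longrightarrow> (\<lambda>m. comm_term Adj u m g x) sums (comm_series u g x)"
  unfolding comm_series_def by (rule op_suminf_sums[OF op_norm_le_comm_term summable_comm_term_bound])

lemma op_sums_comm_series: "op_sums (comm_term Adj u) (comm_series u)"
  unfolding comm_series_def by (rule op_sums_op_suminf[OF op_norm_le_comm_term summable_comm_term_bound])

lemma fpow_telescope_sums: "l2_bound g a \<Longrightarrow> (\<lambda>n. (fop Adj u ^^ n) g x - (fop Adj u ^^ Suc n) g x) sums g x"
proof -
  assume g: "l2_bound g a"
  have "norm ((fop Adj u ^^ n) g x) \<le> f_bound (cmod u) ^ n * a" for n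
    using l2_bound_norm_le[OF op_norm_leD[OF op_norm_le_fpow g]] .
  moreover have "(\<lambda>n. f_bound (cmod u) ^ n * a) \<longlonglongrightarrow> 0"
    using summable_LIMSEQ_zero[OF summable_mult2[OF summable_f_bound_power]] .
  ultimately have "(\<lambda>n. (fop Adj u ^^ n) g x) \<longlonglongrightarrow> 0"
    using Lim_null_comparison[of "\<lambda>n. (fop Adj u ^^ n) g x" "\<lambda>n. f_bound (cmod u) ^ n * a"] by simp
  from telescope_sums'[OF this] show ?thesis
    by simp
qed

lemma one_minus_f_neumann_series:
  assumes g: "l2_bound g a"
  shows "one_minus_f Adj u (neumann_series u g) = g"
proof
  fix x
  have "(\<lambda>n. (fop Adj u ^^ n) g x - fop Adj u ((fop Adj u ^^ n) g) x)
      sums (neumann_series u g x - fop Adj u (neumann_series u g) x)"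
    by (intro sums_diff sums_fop neumann_series_sums[OF g])
  then show "one_minus_f Adj u (neumann_series u g) x = g x"
    unfolding one_minus_f_def using sums_unique2[OF fpow_telescope_sums[OF g]] by simp
qed

lemma op_norm_le_one_minus_f: "op_norm_le (one_minus_f Adj v) (1 + f_bound (cmod v))"
proof (rule op_norm_leI)
  show "0 \<le> 1 + f_bound (cmod v)"
    using f_bound_nonneg by simp
  fix g :: "'v \<Rightarrow> complex" and a assume g: "l2_bound g a"
  from l2_bound_diff[OF g op_norm_leD[OF op_norm_le_fop g]]
  show "l2_bound (one_minus_f Adj v g) ((1 + f_bound (cmod v)) * a)"
    unfolding one_minus_f_def by (simp add: algebra_simps)
qed

lemma neumann_series_one_minus_f:
  assumes g: "l2_bound g a"
  shows "neumann_series u (one_minus_f Adj u g) = g"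
proof
  fix x
  have "(fop Adj u ^^ n) (one_minus_f Adj u g) x = (fop Adj u ^^ n) g x - (fop Adj u ^^ Suc n) g x" for n
    unfolding one_minus_f_def linear_op_diff[OF linear_op_funpow[OF linear_op_fop]]
    by (simp add: funpow_swap1)
  moreover have "(\<lambda>n. (fop Adj u ^^ n) (one_minus_f Adj u g) x) sums neumann_series u (one_minus_f Adj u g) x"
    by (rule neumann_series_sums[OF op_norm_leD[OF op_norm_le_one_minus_f g]])
  ultimately show "neumann_series u (one_minus_f Adj u g) x = g x"
    using sums_unique2[OF fpow_telescope_sums[OF g]] by simp
qed

lemma op_inverse_neumann_series: "op_inverse (one_minus_f Adj u) (neumann_series u)"
  unfolding op_inverse_def
proof (intro conjI ballI)
  show "\<exists>K. op_bound (neumann_series u) K"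
    using op_norm_le_imp_op_bound[OF op_norm_le_neumann_series] by blast
  fix g :: "'v \<Rightarrow> complex" assume "g \<in> ell2"
  then have g: "l2_bound g (l2norm g)" by (rule ell2_l2_bound)
  show "one_minus_f Adj u g \<in> ell2"
    using l2_bound_ell2(1)[OF op_norm_leD[OF op_norm_le_one_minus_f g]] .
  show "neumann_series u (one_minus_f Adj u g) = g"
    by (rule neumann_series_one_minus_f[OF g])
  show "one_minus_f Adj u (neumann_series u g) = g"
    by (rule one_minus_f_neumann_series[OF g])
qed

lemma op_inverse_eq_neumann_series:
  assumes R: "op_inverse (one_minus_f Adj u) R" and g: "g \<in> ell2"
  shows "R g = neumann_series u g"
proof -
  have g': "l2_bound g (l2norm g)" using ell2_l2_bound[OF g] .
  have "neumann_series u g \<in> ell2"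
    using l2_bound_ell2(1)[OF op_norm_leD[OF op_norm_le_neumann_series g']] .
  then have "R (one_minus_f Adj u (neumann_series u g)) = neumann_series u g"
    using R unfolding op_inverse_def by blast
  then show ?thesis
    using one_minus_f_neumann_series[OF g'] by simp
qed

lemma fop'_neumann_series:
  assumes g: "l2_bound g a"
  shows "fop' Adj u (neumann_series u g) = (\<lambda>x. - log_series_deriv u g x + u\<^sup>2 * comm_series u g x)"
proof
  fix x
  have "(\<lambda>m. fop' Adj u ((fop Adj u ^^ m) g) x) sums (fop' Adj u (neumann_series u g) x)"
    by (intro sums_fop' neumann_series_sums[OF g])
  moreover have "fop' Adj u ((fop Adj u ^^ m) g) x = - log_deriv_term u m g x + u\<^sup>2 * comm_term Adj u m g x"
    for m
    unfolding log_deriv_term_def fop'_fpow_eq by simp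
  moreover have "(\<lambda>m. - log_deriv_term u m g x + u\<^sup>2 * comm_term Adj u m g x)
      sums (- log_series_deriv u g x + u\<^sup>2 * comm_series u g x)"
    by (intro sums_add sums_minus sums_mult log_series_deriv_sums[OF g] comm_series_sums[OF g])
  ultimately show "fop' Adj u (neumann_series u g) x = - log_series_deriv u g x + u\<^sup>2 * comm_series u g x"
    by (simp add: sums_unique2)
qed

end

section \<open>Differentiating the logarithm series\<close>

lemma op_norm_le_fpow_le: "f_bound (cmod v) \<le> q \<Longrightarrow> op_norm_le (fop Adj v ^^ n) (q ^ n)"
  using op_norm_le_mono[OF op_norm_le_fpow] f_bound_nonneg power_mono by metis

lemma fop_diff_l2_bound:
  assumes h: "cmod h \<le> 1" and k: "l2_bound k b"
  shows "l2_bound (\<lambda>x. fop Adj (u + h) k x - fop Adj u k x) (cmod h * (fderiv_bound (cmod u) + M) * b)"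
proof -
  have "l2_bound (\<lambda>x. h * fop' Adj u k x - h\<^sup>2 * opQ Adj k x)
      (cmod h * (fderiv_bound (cmod u) * b) + cmod (h\<^sup>2) * (M * b))"
    by (intro l2_bound_diff l2_bound_scale op_norm_leD[OF op_norm_le_fop' k] op_norm_leD[OF op_norm_le_opQ k])
  moreover have "cmod (h\<^sup>2) * (M * b) \<le> cmod h * (M * b)"
    using h sup_deg_nonneg l2_bound_nonneg[OF k]
    by (intro mult_right_mono) (auto simp: norm_mult power2_eq_square mult_left_le_one_le)
  ultimately have "l2_bound (\<lambda>x. h * fop' Adj u k x - h\<^sup>2 * opQ Adj k x)
      (cmod h * (fderiv_bound (cmod u) + M) * b)"
    by (auto elim!: l2_bound_mono simp: algebra_simps)
  then show ?thesis
    by (simp add: fop_add_eq)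
qed

lemma fpow_diff_l2_bound:
  assumes qu: "f_bound (cmod u) \<le> q" and quh: "f_bound (cmod (u + h)) \<le> q"
    and h: "cmod h \<le> 1" and g: "l2_bound g a"
  shows "l2_bound (\<lambda>x. (fop Adj (u + h) ^^ Suc n) g x - (fop Adj u ^^ Suc n) g x)
           (real (Suc n) * (cmod h * (fderiv_bound (cmod u) + M)) * q ^ n * a)"
proof (induction n)
  case 0
  show ?case using fop_diff_l2_bound[OF h g] by simp
next
  case (Suc n)
  let ?P = "(fop Adj (u + h) ^^ Suc n) g" and ?F = "(fop Adj u ^^ Suc n) g"
  have "l2_bound (\<lambda>x. (fop Adj (u + h) ?P x - fop Adj u ?P x) + fop Adj u (\<lambda>y. ?P y - ?F y) x)
     (cmod h * (fderiv_bound (cmod u) + M) * (q ^ Suc n * a)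
      + q * (real (Suc n) * (cmod h * (fderiv_bound (cmod u) + M)) * q ^ n * a))"
    by (intro l2_bound_add fop_diff_l2_bound[OF h] op_norm_leD[OF op_norm_le_fpow_le[OF quh] g]
        op_norm_leD[OF op_norm_le_mono[OF op_norm_le_fop qu] Suc.IH])
  then show ?case
    by (simp add: linear_op_diff[OF linear_op_fop] algebra_simps)
qed

lemma sup_deg_le_of_error_const:
  assumes q: "0 < q" and C: "M * q + fderiv_bound (cmod u) * (fderiv_bound (cmod u) + M) \<le> C * q"
  shows "M \<le> C"
proof -
  have "0 \<le> fderiv_bound (cmod u) * (fderiv_bound (cmod u) + M)"
    using fderiv_bound_nonneg sup_deg_nonneg by simp
  then have "M * q \<le> C * q"
    using C by linarith
  then show ?thesis
    using q by simp
qed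

lemma fpow_deriv_error_l2_bound:
  assumes qu: "f_bound (cmod u) \<le> q" and quh: "f_bound (cmod (u + h)) \<le> q" and q: "0 < q"
    and h1: "cmod h \<le> 1" and h: "h \<noteq> 0"
    and C: "M * q + fderiv_bound (cmod u) * (fderiv_bound (cmod u) + M) \<le> C * q"
    and g: "l2_bound g a"
  shows "l2_bound (fpow_deriv_error Adj u h (Suc n) g) (cmod h * C * (real (Suc n))\<^sup>2 * q ^ n * a)"
proof (induction n)
  case 0
  have "cmod h * (M * a) \<le> cmod h * C * a"
    using sup_deg_le_of_error_const[OF q C] l2_bound_nonneg[OF g]
    by (simp add: mult.assoc mult_left_mono mult_right_mono)
  then show ?case
    using l2_bound_mono[OF l2_bound_scale[OF op_norm_leD[OF op_norm_le_opQ g], of "- h"]]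
      fpow_deriv_error_1[OF h, of Adj u g]
    by simp
next
  case (Suc n)
  let ?P = "(fop Adj (u + h) ^^ Suc n) g"
  let ?F = "fderiv_bound (cmod u)" and ?G = "fderiv_bound (cmod u) + M"
  define c where "c = cmod h * q ^ n * a"
  have c: "0 \<le> c"
    unfolding c_def using q l2_bound_nonneg[OF g] by simp
  have bound: "l2_bound (fpow_deriv_error Adj u h (Suc (Suc n)) g)
      (q * (cmod h * C * (real (Suc n))\<^sup>2 * q ^ n * a)
       + ?F * (real (Suc n) * (cmod h * ?G) * q ^ n * a) + cmod h * (M * (q ^ Suc n * a)))"
    unfolding fpow_deriv_error_Suc[OF h, of Adj u "Suc n" g]
    by (intro l2_bound_diff l2_bound_add l2_bound_scale
        op_norm_leD[OF op_norm_le_mono[OF op_norm_le_fop qu] Suc.IH]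
        op_norm_leD[OF op_norm_le_fop' fpow_diff_l2_bound[OF qu quh h1 g]]
        op_norm_leD[OF op_norm_le_opQ op_norm_leD[OF op_norm_le_fpow_le[OF quh] g]])
  have "q * (cmod h * C * (real (Suc n))\<^sup>2 * q ^ n * a)
       + ?F * (real (Suc n) * (cmod h * ?G) * q ^ n * a) + cmod h * (M * (q ^ Suc n * a))
     = c * (q * C * (real n + 1)\<^sup>2 + ?F * ?G * (real n + 1) + M * q)"
    unfolding c_def by (simp add: algebra_simps)
  also have "\<dots> \<le> c * (C * (real n + 2)\<^sup>2 * q)"
    using q C fderiv_bound_nonneg sup_deg_nonneg
    by (intro mult_left_mono c quadratic_bound_step) auto
  also have "\<dots> = cmod h * C * (real (Suc (Suc n)))\<^sup>2 * q ^ Suc n * a"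
    unfolding c_def by (simp add: algebra_simps)
  finally show ?case
    by (rule l2_bound_mono[OF bound])
qed

lemma log_series_diff_quotient_op_norm_le:
  assumes u: "cmod u < 1 / alpha Adj" and uh: "cmod (u + h) < 1 / alpha Adj"
    and qu: "f_bound (cmod u) \<le> q" and quh: "f_bound (cmod (u + h)) \<le> q" and q: "0 < q" "q < 1"
    and h1: "cmod h \<le> 1" and h: "h \<noteq> 0"
    and C: "M * q + fderiv_bound (cmod u) * (fderiv_bound (cmod u) + M) \<le> C * q"
  shows "op_norm_le (\<lambda>g x. (log_series (u + h) g x - log_series u g x) / h - log_series_deriv u g x)
           (cmod h * (C * (\<Sum>m. real (Suc m) * q ^ m)))"
proof (rule op_norm_leI)
  have summable: "summable (\<lambda>m. real (Suc m) * q ^ m)"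
    using sums_summable[OF geometric_deriv_sums[of q]] q by simp
  show "0 \<le> cmod h * (C * (\<Sum>m. real (Suc m) * q ^ m))"
    using sup_deg_le_of_error_const[OF q(1) C] sup_deg_nonneg q summable by (simp add: suminf_nonneg)
  fix g :: "'v \<Rightarrow> complex" and a assume g: "l2_bound g a"
  define T where "T m x = - (1 / of_nat (Suc m)) * fpow_deriv_error Adj u h (Suc m) g x" for m x
  have "(\<lambda>m. (log_term Adj (u + h) m g x - log_term Adj u m g x) / h - log_deriv_term u m g x)
      sums ((log_series (u + h) g x - log_series u g x) / h - log_series_deriv u g x)" for x
    by (intro sums_diff sums_divide log_series_sums[OF uh g] log_series_sums[OF u g]
        log_series_deriv_sums[OF u g])
  moreover have "(log_term Adj (u + h) m g x - log_term Adj u m g x) / h - log_deriv_term u m g x = T m x"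
    for m x
    unfolding log_term_def log_deriv_term_def T_def fpow_deriv_error_def using h
    by (simp add: field_simps del: fpow_deriv.simps funpow.simps of_nat_Suc)
  ultimately have "(\<lambda>x. (log_series (u + h) g x - log_series u g x) / h - log_series_deriv u g x)
      = (\<lambda>x. \<Sum>m. T m x)"
    by (simp add: sums_unique fun_eq_iff)
  moreover have "l2_bound (T m) (cmod h * C * a * (real (Suc m) * q ^ m))" for m
  proof -
    have "l2_bound (T m) (1 / real (Suc m) * (cmod h * C * (real (Suc m))\<^sup>2 * q ^ m * a))"
      unfolding T_def
      by (intro l2_bound_scale_le fpow_deriv_error_l2_bound[OF qu quh q(1) h1 h C g])
        (simp add: norm_inverse_Suc del: of_nat_Suc)
    then show ?thesis
      by (simp add: power2_eq_square mult_ac del: of_nat_Suc)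
  qed
  then have "l2_bound (\<lambda>x. \<Sum>m. T m x) (\<Sum>m. cmod h * C * a * (real (Suc m) * q ^ m))"
    by (rule l2_bound_suminf(2)) (intro summable_mult summable)
  ultimately show "l2_bound (\<lambda>x. (log_series (u + h) g x - log_series u g x) / h - log_series_deriv u g x)
      (cmod h * (C * (\<Sum>m. real (Suc m) * q ^ m)) * a)"
    using suminf_mult[OF summable, of "cmod h * C * a"] by (simp add: mult_ac)
qed

text \<open>Near u the norms of f stay below q = f_bound t for a fixed t between |u|
  and 1/alpha, which makes the error estimate uniform in h.\<close>

lemma log_series_has_deriv:
  assumes u: "cmod u < 1 / alpha Adj"
  shows "op_has_deriv log_series (log_series_deriv u) u"
proof -
  define t where "t = (cmod u + 1 / alpha Adj) / 2"
  define q where "q = f_bound t"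
  define C where "C = M + fderiv_bound (cmod u) * (fderiv_bound (cmod u) + M) / q"
  have t: "cmod u < t" "t < 1 / alpha Adj"
    unfolding t_def using u by auto
  have "0 < t"
    using t(1) norm_ge_zero[of u] by linarith
  then have q: "0 < q" "q < 1"
    unfolding q_def using f_bound_strict_mono[of 0 t] f_bound_less_1[of t] t(2)
    by (auto simp: f_bound_def)
  have C: "M * q + fderiv_bound (cmod u) * (fderiv_bound (cmod u) + M) \<le> C * q"
    unfolding C_def using q by (simp add: field_simps)
  show ?thesis
  proof (rule op_has_derivI)
    show "0 < min (t - cmod u) 1" using t by simp
    show "0 \<le> C * (\<Sum>m. real (Suc m) * q ^ m)"
      unfolding C_def using q sup_deg_nonneg fderiv_bound_nonneg
      by (intro mult_nonneg_nonneg suminf_nonneg sums_summable[OF geometric_deriv_sums]) auto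
    fix h assume h: "h \<noteq> 0" "cmod h < min (t - cmod u) 1"
    then have uh: "cmod (u + h) < t"
      using norm_triangle_ineq[of u h] by simp
    then have "f_bound (cmod u) \<le> q" "f_bound (cmod (u + h)) \<le> q"
      unfolding q_def using t by (auto intro: f_bound_mono)
    with uh t h show "op_norm_le (\<lambda>g x. (log_series (u + h) g x - log_series u g x) / h
        - log_series_deriv u g x) (cmod h * (C * (\<Sum>m. real (Suc m) * q ^ m)))"
      by (intro log_series_diff_quotient_op_norm_le[OF u _ _ _ q _ h(1) C]) auto
  qed
qed

lemma log_series_deriv_unique:
  assumes u: "cmod u < 1 / alpha Adj"
    and L: "\<forall>v. cmod v < 1 / alpha Adj \<longrightarrow> op_sums (log_term Adj v) (L v)"
    and D: "op_has_deriv L D u" and g: "g \<in> ell2"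
  shows "D g = log_series_deriv u g"
proof (rule op_has_deriv_unique[OF D log_series_has_deriv[OF u] _ _ g])
  show "0 < 1 / alpha Adj - cmod u" using u by simp
  fix v :: complex and k :: "'v \<Rightarrow> complex"
  assume "cmod (v - u) < 1 / alpha Adj - cmod u" "k \<in> ell2"
  moreover from this(1) have "cmod v < 1 / alpha Adj"
    using norm_triangle_ineq[of "v - u" u] by simp
  ultimately show "L v k = log_series v k"
    using op_sums_unique[OF _ op_sums_log_series] L by blast
qed

end

lemma one_le_sup_deg:
  assumes "cmod u < 1 / alpha Adj"
  shows "1 \<le> sup_deg Adj"
proof (rule ccontr)
  assume "\<not> 1 \<le> sup_deg Adj"
  then have "sup_deg Adj = 0"
    unfolding sup_deg_def by simp
  then have "alpha Adj = 0"
    unfolding alpha_def by simp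
  then show False using assms by simp
qed

theorem proposition4p3:
  fixes Adj :: "'v::countable \<Rightarrow> 'v \<Rightarrow> bool" and u :: complex
  assumes irrefl: "\<And>x. \<not> Adj x x"
    and sym: "\<And>x y. Adj x y \<Longrightarrow> Adj y x"
    and connected: "\<And>x y. Adj\<^sup>*\<^sup>* x y"
    and bounded_deg: "\<exists>K. \<forall>x. finite {y. Adj x y} \<and> deg Adj x \<le> K"
    and no_deg_one: "\<And>x. deg Adj x \<noteq> 1"
    and u: "cmod u < 1 / alpha Adj"
  shows "(\<exists>R. op_inverse (one_minus_f Adj u) R)
    \<and> (\<exists>L D S. (\<forall>v. cmod v < 1 / alpha Adj \<longrightarrow> op_sums (log_term Adj v) (L v))
              \<and> op_has_deriv L D u \<and> op_sums (comm_term Adj u) S)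
    \<and> (\<forall>R L D S. op_inverse (one_minus_f Adj u) R
          \<and> (\<forall>v. cmod v < 1 / alpha Adj \<longrightarrow> op_sums (log_term Adj v) (L v))
          \<and> op_has_deriv L D u \<and> op_sums (comm_term Adj u) S
          \<longrightarrow> (\<forall>g\<in>ell2. fop' Adj u (R g) = (\<lambda>x. - D g x + u\<^sup>2 * S g x)))"
proof -
  interpret bounded_degree_graph Adj
    using sym bounded_deg one_le_sup_deg[OF u] by unfold_locales (auto intro: bdd_aboveI)
  show ?thesis
  proof (intro conjI allI impI ballI)
    show "\<exists>R. op_inverse (one_minus_f Adj u) R"
      using op_inverse_neumann_series[OF u] by blast
    show "\<exists>L D S. (\<forall>v. cmod v < 1 / alpha Adj \<longrightarrow> op_sums (log_term Adj v) (L v))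
        \<and> op_has_deriv L D u \<and> op_sums (comm_term Adj u) S"
      using op_sums_log_series log_series_has_deriv[OF u] op_sums_comm_series[OF u] by blast
    fix R L D S and g :: "'v \<Rightarrow> complex"
    assume "op_inverse (one_minus_f Adj u) R
        \<and> (\<forall>v. cmod v < 1 / alpha Adj \<longrightarrow> op_sums (log_term Adj v) (L v))
        \<and> op_has_deriv L D u \<and> op_sums (comm_term Adj u) S" and g: "g \<in> ell2"
    then have "R g = neumann_series u g" "D g = log_series_deriv u g" "S g = comm_series u g"
      using op_inverse_eq_neumann_series[OF u] log_series_deriv_unique[OF u]
        op_sums_unique[OF _ op_sums_comm_series[OF u]] by blast+
    then show "fop' Adj u (R g) = (\<lambda>x. - D g x + u\<^sup>2 * S g x)"
      using fop'_neumann_series[OF u ell2_l2_bound[OF g]] by simp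
  qed
qed
end
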